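(* Let $a_1,a_2>0$, let $\omega=\{\mathbf y=(y_1,y_2)\in\mathbb R^2:\ y_1^2/a_1^2+y_2^2/a_2^2<1\}$ be the open elliptical domain with boundary $\Gamma=\partial\omega$, set $s=a_2/a_1$, and define $$\theta(\mathbf y)=1-\frac{y_1^2}{a_1^2}-\frac{y_2^2}{a_2^2},\qquad \bar p(\mathbf y)=p_0\,\theta(\mathbf y)^2,\qquad \rho(\mathbf y)=\Bigl(\frac{s\,y_1^2}{a_1^2}+\frac{y_2^2}{s\,a_2^2}\Bigr)\theta(\mathbf y),$$ where $p_0>0$ is a constant. Let $m>0$, $h_1,h_2>0$, $E_1,E_2>0$ be constants, and let $\tilde H_1,\tilde H_2$ be continuously differentiable real functions on $\overline{\omega}$. Suppose $\tilde p\in C^2(\overline\omega)$ solves $$-m^{-1}\Delta_y\tilde p(\mathbf y)=\sum_{\alpha=1}^2\frac{3h_\alpha^2}{E_\alpha}\nabla_y\cdot\bigl(\tilde H_\alpha(\mathbf y)\nabla_y\bar p(\mathbf y)\bigr),\quad \mathbf y\in\omega,\qquad \tilde p(\mathbf y)=0,\quad \mathbf y\in\Gamma.$$ Then $$\iint_\omega\tilde p(\mathbf y)\,d\mathbf y=0\quad\text{if and only if}\quad \sum_{\alpha=1}^2\frac{h_\alpha^2}{E_\alpha}\iint_\omega\tilde H_\alpha(\mathbf y)\,\rho(\mathbf y)\,d\mathbf y=0.$$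
   Context: $\Delta_y=\partial^2/\partial y_1^2+\partial^2/\partial y_2^2$ is the Laplacian and $\nabla_y=(\partial/\partial y_1,\partial/\partial y_2)$ the gradient in the plane variables $\mathbf y=(y_1,y_2)$; the dot denotes the Euclidean scalar product. In the application, $\tilde p$ is the first-order variation of the contact pressure caused by small thickness variations $\tilde H_\alpha$ of two thin incompressible elastic layers (thicknesses $h_\alpha$, Young's moduli $E_\alpha$, $m=(E_1^{-1}h_1^3+E_2^{-1}h_2^3)^{-1}$), and $\bar p$ is the unperturbed pressure on the elliptical contact region $\omega$. *)

theory Defs
  imports "HOL-Analysis.Analysis"
begin

definition ellipse :: "real \<Rightarrow> real \<Rightarrow> (real \<times> real) set" where
  "ellipse a1 a2 = {y. (fst y)\<^sup>2 / a1\<^sup>2 + (snd y)\<^sup>2 / a2\<^sup>2 < 1}"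

definition pd1 :: "(real \<times> real \<Rightarrow> real) \<Rightarrow> real \<times> real \<Rightarrow> real" where
  "pd1 f y = deriv (\<lambda>t. f (t, snd y)) (fst y)"

definition pd2 :: "(real \<times> real \<Rightarrow> real) \<Rightarrow> real \<times> real \<Rightarrow> real" where
  "pd2 f y = deriv (\<lambda>t. f (fst y, t)) (snd y)"

definition laplacian :: "(real \<times> real \<Rightarrow> real) \<Rightarrow> real \<times> real \<Rightarrow> real" where
  "laplacian f y = pd1 (pd1 f) y + pd2 (pd2 f) y"

definition div_H_grad :: "(real \<times> real \<Rightarrow> real) \<Rightarrow> (real \<times> real \<Rightarrow> real) \<Rightarrow> real \<times> real \<Rightarrow> real" where
  "div_H_grad H P y = pd1 (\<lambda>z. H z * pd1 P z) y + pd2 (\<lambda>z. H z * pd2 P z) y"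

text \<open>C^1 on the closure of a bounded open set S: continuous on the closure, differentiable
  in S, with first partial derivatives uniformly continuous on S (equivalently, extending
  continuously to the closure, S being bounded).\<close>
definition C1_closure :: "(real \<times> real) set \<Rightarrow> (real \<times> real \<Rightarrow> real) \<Rightarrow> bool" where
  "C1_closure S f \<longleftrightarrow> continuous_on (closure S) f \<and> f differentiable_on S \<and>
     uniformly_continuous_on S (pd1 f) \<and> uniformly_continuous_on S (pd2 f)"

definition C2_closure :: "(real \<times> real) set \<Rightarrow> (real \<times> real \<Rightarrow> real) \<Rightarrow> bool" where
  "C2_closure S f \<longleftrightarrow> C1_closure S f \<and>
     pd1 f differentiable_on S \<and> pd2 f differentiable_on S \<and>
     uniformly_continuous_on S (pd1 (pd1 f)) \<and> uniformly_continuous_on S (pd2 (pd1 f)) \<and>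
     uniformly_continuous_on S (pd1 (pd2 f)) \<and> uniformly_continuous_on S (pd2 (pd2 f))"

definition theta :: "real \<Rightarrow> real \<Rightarrow> real \<times> real \<Rightarrow> real" where
  "theta a1 a2 y = 1 - (fst y)\<^sup>2 / a1\<^sup>2 - (snd y)\<^sup>2 / a2\<^sup>2"

definition pbar :: "real \<Rightarrow> real \<Rightarrow> real \<Rightarrow> real \<times> real \<Rightarrow> real" where
  "pbar p0 a1 a2 y = p0 * (theta a1 a2 y)\<^sup>2"

definition rho :: "real \<Rightarrow> real \<Rightarrow> real \<times> real \<Rightarrow> real" where
  "rho a1 a2 y = (let s = a2 / a1 in
     (s * (fst y)\<^sup>2 / a1\<^sup>2 + (snd y)\<^sup>2 / (s * a2\<^sup>2)) * theta a1 a2 y)"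

end

theory Submission
  imports Defs
begin

text \<open>
  The function \<open>w = a1\<^sup>2 a2\<^sup>2 \<theta> / (2 (a1\<^sup>2 + a2\<^sup>2))\<close> (\<open>torsion\<close> below) solves
  \<open>-\<Delta>w = 1\<close> in the ellipse and vanishes on its boundary. Integrating by parts against \<open>w\<close>,
  with boundary terms killed by \<open>p = 0\<close> and \<open>w = 0\<close> on the boundary, gives
  \<open>\<integral>p = -\<integral>w \<Delta>p\<close> and \<open>\<integral>w div(H \<nabla>pbar) = -\<integral>H \<nabla>w\<cdot>\<nabla>pbar\<close>, and a direct computation shows
  \<open>\<nabla>w\<cdot>\<nabla>pbar = K \<rho>\<close> with \<open>K = 4 p0 a1 a2 / (a1\<^sup>2 + a2\<^sup>2) > 0\<close>. Inserting the equation for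
  \<open>p\<close> yields \<open>\<integral>p = -3 m K \<Sum>\<^sub>\<alpha> h\<^sub>\<alpha>\<^sup>2 / E\<^sub>\<alpha> \<integral>H\<^sub>\<alpha> \<rho>\<close>.
  Both integrations by parts are instances of a zero-flux divergence theorem on a bounded convex
  domain, which follows from Fubini's theorem and the fundamental theorem of calculus on every chord.
\<close>

section \<open>Derivatives integrated over chords\<close>

lemma open_convex_bounded_eq_greaterThanLessThan:
  fixes T :: "real set"
  assumes "open T" "convex T" "bounded T" "T \<noteq> {}"
  shows "T = {Inf T<..<Sup T}"
proof -
  have bdd: "bdd_below T" "bdd_above T"
    using assms(3) by (auto simp: bounded_imp_bdd_below bounded_imp_bdd_above)
  show ?thesis
  proof (intro subset_antisym subsetI)
    fix x assume "x \<in> T"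
    then obtain e where "e > 0" "ball x e \<subseteq> T" using assms(1) openE by blast
    then have "x - e/2 \<in> T" "x + e/2 \<in> T" by (auto simp: dist_real_def)
    then have "Inf T \<le> x - e/2" "x + e/2 \<le> Sup T"
      using bdd by (auto intro: cInf_lower cSup_upper)
    then show "x \<in> {Inf T<..<Sup T}" using \<open>e > 0\<close> by auto
  next
    fix x assume "x \<in> {Inf T<..<Sup T}"
    then obtain a b where "a \<in> T" "a < x" "b \<in> T" "x < b"
      using assms(4) cInf_lessD less_cSupD by (metis greaterThanLessThan_iff)
    then show "x \<in> T"
      using assms(2) unfolding is_interval_convex_1[symmetric] by (meson mem_is_interval_1_I less_imp_le)
  qed
qed

lemma at_within_greaterThanLessThan:
  fixes l u :: real
  assumes "l < u"
  shows "at l within {l<..<u} = at_right l" "at u within {l<..<u} = at_left u"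
proof -
  show "at l within {l<..<u} = at_right l"
    by (rule at_within_nhd[where S = "{..<u}"]) (use assms in auto)
  show "at u within {l<..<u} = at_left u"
    by (rule at_within_nhd[where S = "{l<..}"]) (use assms in auto)
qed

lemma has_integral_derivative_vanishing_at_frontier:
  fixes \<phi> \<delta> :: "real \<Rightarrow> real" and T :: "real set"
  assumes T: "open T" "convex T" "bounded T"
    and deriv: "\<And>t. t \<in> T \<Longrightarrow> (\<phi> has_real_derivative \<delta> t) (at t)"
    and lim: "\<And>t. t \<in> frontier T \<Longrightarrow> (\<phi> \<longlongrightarrow> 0) (at t within T)"
  shows "(\<delta> has_integral 0) T"
proof (cases "T = {}")
  case False
  define l u where "l = Inf T" and "u = Sup T"
  have T_eq: "T = {l<..<u}"
    using open_convex_bounded_eq_greaterThanLessThan[OF T False] by (simp add: l_def u_def)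
  then have "l < u" using False by auto
  then have fr: "l \<in> frontier T" "u \<in> frontier T"
    by (auto simp: T_eq frontier_def interior_open)
  define G where "G t = (if t \<in> T then \<phi> t else 0)" for t
  have G_deriv: "(G has_real_derivative \<delta> t) (at t)" if "t \<in> T" for t
    by (rule has_field_derivative_transform_within_open[OF deriv[OF that] T(1) that])
       (simp add: G_def)
  have G_lim: "(G \<longlongrightarrow> 0) (at t within T)" if "t \<in> frontier T" for t
    using lim[OF that] by (rule tendsto_cong[THEN iffD1, rotated])
      (simp add: G_def eventually_at_filter)
  have "continuous_on {l..u} G"
  proof (rule continuous_on_IccI)
    show "(G \<longlongrightarrow> G l) (at_right l)" "(G \<longlongrightarrow> G u) (at_left u)"
      using G_lim[OF fr(1)] G_lim[OF fr(2)] at_within_greaterThanLessThan[OF \<open>l < u\<close>]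
      by (simp_all add: G_def T_eq)
    show "(G \<longlongrightarrow> G t) (at t)" if "l < t" "t < u" for t
      using DERIV_isCont[OF G_deriv] that by (simp add: T_eq isCont_def)
  qed (rule \<open>l < u\<close>)
  then have "(\<delta> has_integral G u - G l) {l..u}"
    using \<open>l < u\<close> G_deriv
    by (intro fundamental_theorem_of_calculus_interior)
      (auto simp: T_eq has_real_derivative_iff_has_vector_derivative)
  then show ?thesis
    by (simp add: G_def T_eq has_integral_Icc_iff_Ioo)
qed simp

lemma frontier_vimage_subset:
  assumes "open S" "continuous_on UNIV e"
  shows "frontier (e -` S) \<subseteq> e -` frontier S"
proof
  fix t assume t: "t \<in> frontier (e -` S)"
  have "open (e -` S)" using assms open_vimage by blast
  then have "t \<notin> e -` S" "t \<in> closure (e -` S)" using t by (auto simp: frontier_def interior_open)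
  moreover have "e ` closure (e -` S) \<subseteq> closure S"
    using image_closure_subset[OF assms(2)[THEN continuous_on_subset] closed_closure]
    by (metis closure_subset image_vimage_subset subset_UNIV subset_trans)
  ultimately show "t \<in> e -` frontier S"
    using assms(1) by (auto simp: frontier_def interior_open)
qed

lemma tendsto_compose_vimage_at_frontier:
  assumes "(g \<longlongrightarrow> L) (at (e t) within S)" "isCont e t" "e t \<notin> S"
  shows "((\<lambda>s. g (e s)) \<longlongrightarrow> L) (at t within e -` S)"
proof (rule filterlim_compose[OF assms(1)], rule filterlim_at_withinI)
  show "(e \<longlongrightarrow> e t) (at t within e -` S)"
    using assms(2) continuous_at_imp_continuous_at_within continuous_within by blast
  show "\<forall>\<^sub>F s in at t within e -` S. e s \<in> S - {e t}"
    using assms(3) by (auto simp: eventually_at_filter)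
qed

lemma tendsto_at_frontier_within:
  assumes "continuous_on (closure S) f" "z \<in> frontier S"
  shows "(f \<longlongrightarrow> f z) (at z within S)"
proof -
  have "z \<in> closure S" using assms(2) by (simp add: frontier_def)
  then have "(f \<longlongrightarrow> f z) (at z within closure S)"
    using assms(1) by (simp add: continuous_on_def)
  then show ?thesis
    by (rule tendsto_within_subset[OF _ closure_subset])
qed

lemma tendsto_zero_mult_bounded:
  fixes f g :: "'a::topological_space \<Rightarrow> real"
  assumes "(f \<longlongrightarrow> 0) (at z within S)" "bounded (g ` S)"
  shows "((\<lambda>y. f y * g y) \<longlongrightarrow> 0) (at z within S)"
proof -
  obtain B where B: "\<And>y. y \<in> S \<Longrightarrow> \<bar>g y\<bar> \<le> B"
    using assms(2) by (auto simp: bounded_iff)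
  show ?thesis
  proof (rule tendsto_0_le[OF assms(1), where K = B])
    show "\<forall>\<^sub>F y in at z within S. norm (f y * g y) \<le> norm (f y) * B"
      unfolding eventually_at_filter
      by (rule always_eventually) (auto simp: abs_mult B mult_left_mono)
  qed
qed

lemma has_integral_on_section_vanishing_at_frontier:
  fixes S :: "'a::topological_space set" and e :: "real \<Rightarrow> 'a" and g :: "'a \<Rightarrow> real"
  assumes S: "open S" and e: "continuous_on UNIV e"
    and slice: "convex (e -` S)" "bounded (e -` S)"
    and deriv: "\<And>t. e t \<in> S \<Longrightarrow> ((\<lambda>s. g (e s)) has_real_derivative \<delta> t) (at t)"
    and lim: "\<And>z. z \<in> frontier S \<Longrightarrow> (g \<longlongrightarrow> 0) (at z within S)"
  shows "(\<delta> has_integral 0) (e -` S)"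
proof (rule has_integral_derivative_vanishing_at_frontier[OF _ slice])
  show "open (e -` S)" using S e open_vimage by blast
  show "((\<lambda>s. g (e s)) \<longlongrightarrow> 0) (at t within e -` S)" if "t \<in> frontier (e -` S)" for t
  proof (rule tendsto_compose_vimage_at_frontier)
    have "e t \<in> frontier S" using frontier_vimage_subset[OF S e] that by blast
    then show "(g \<longlongrightarrow> 0) (at (e t) within S)" "e t \<notin> S"
      using lim S by (auto simp: frontier_def interior_open)
    show "isCont e t" using e by (simp add: continuous_on_eq_continuous_at)
  qed
qed (use deriv in auto)

lemma convex_bounded_sections:
  fixes S :: "(real \<times> real) set"
  assumes "convex S" "bounded S"
  shows "convex {t. (t, x) \<in> S}" "bounded {t. (t, x) \<in> S}"
    and "convex {t. (x, t) \<in> S}" "bounded {t. (x, t) \<in> S}"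
proof -
  have comb: "u * x + v * x = x" if "u + v = 1" for u v :: real
    using that by (metis distrib_right mult_1)
  show "convex {t. (t, x) \<in> S}" "convex {t. (x, t) \<in> S}"
    using convexD[OF assms(1), of "(_, x)" "(_, x)"] convexD[OF assms(1), of "(x, _)" "(x, _)"]
    by (auto intro!: convexI simp: comb)
  show "bounded {t. (t, x) \<in> S}" "bounded {t. (x, t) \<in> S}"
  proof -
    have "{t. (t, x) \<in> S} \<subseteq> fst ` S" "{t. (x, t) \<in> S} \<subseteq> snd ` S"
      by force+
    then show "bounded {t. (t, x) \<in> S}" "bounded {t. (x, t) \<in> S}"
      using bounded_fst[OF assms(2)] bounded_snd[OF assms(2)] bounded_subset by blast+
  qed
qed

section \<open>A divergence theorem with vanishing boundary values\<close>

definition bounded_continuous_on :: "'a::topological_space set \<Rightarrow> ('a \<Rightarrow> real) \<Rightarrow> bool" where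
  "bounded_continuous_on S f \<longleftrightarrow> continuous_on S f \<and> bounded (f ` S)"

lemma bounded_continuous_on_const: "bounded_continuous_on S (\<lambda>y. c)"
  by (auto simp: bounded_continuous_on_def image_constant_conv)

lemma bounded_continuous_on_add:
  "bounded_continuous_on S f \<Longrightarrow> bounded_continuous_on S g \<Longrightarrow> bounded_continuous_on S (\<lambda>y. f y + g y)"
  by (auto simp: bounded_continuous_on_def intro: continuous_intros bounded_plus_comp)

lemma bounded_continuous_on_diff:
  "bounded_continuous_on S f \<Longrightarrow> bounded_continuous_on S g \<Longrightarrow> bounded_continuous_on S (\<lambda>y. f y - g y)"
  by (auto simp: bounded_continuous_on_def intro: continuous_intros bounded_minus_comp)

lemma bounded_continuous_on_mult:
  assumes "bounded_continuous_on S f" "bounded_continuous_on S g"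
  shows "bounded_continuous_on S (\<lambda>y. f y * g y)"
proof -
  obtain B C where "\<And>y. y \<in> S \<Longrightarrow> \<bar>f y\<bar> \<le> B" "\<And>y. y \<in> S \<Longrightarrow> \<bar>g y\<bar> \<le> C"
    using assms by (auto simp: bounded_continuous_on_def bounded_iff)
  then have "\<bar>f y * g y\<bar> \<le> B * C" if "y \<in> S" for y
    unfolding abs_mult using that by (meson abs_ge_zero mult_mono order_trans)
  then show ?thesis
    using assms by (auto simp: bounded_continuous_on_def bounded_iff intro: continuous_intros)
qed

lemma bounded_continuous_on_closure:
  fixes S :: "'a::heine_borel set"
  assumes "bounded S" "continuous_on (closure S) f"
  shows "bounded_continuous_on S f"
proof -
  have "bounded (f ` closure S)"
    using assms compact_closure compact_continuous_image compact_imp_bounded by blast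
  then show ?thesis
    using assms closure_subset unfolding bounded_continuous_on_def
    by (meson bounded_subset continuous_on_subset image_mono)
qed

lemma continuous_imp_bounded_continuous_on:
  fixes S :: "'a::heine_borel set"
  shows "bounded S \<Longrightarrow> continuous_on UNIV f \<Longrightarrow> bounded_continuous_on S f"
  by (meson bounded_continuous_on_closure continuous_on_subset subset_UNIV)

lemma uniformly_continuous_imp_bounded_continuous_on:
  fixes S :: "'a::heine_borel set"
  shows "bounded S \<Longrightarrow> uniformly_continuous_on S f \<Longrightarrow> bounded_continuous_on S f"
  by (simp add: bounded_continuous_on_def bounded_uniformly_continuous_image
      uniformly_continuous_imp_continuous)

lemma integrable_lborel_indicator_bounded_continuous:
  fixes S :: "'a::euclidean_space set"
  assumes "open S" "bounded S" "bounded_continuous_on S d"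
  shows "integrable lborel (\<lambda>z. indicator S z *\<^sub>R d z)"
proof -
  obtain B where B: "\<And>y. y \<in> S \<Longrightarrow> norm (d y) \<le> B"
    using assms(3) by (auto simp: bounded_continuous_on_def bounded_iff)
  show ?thesis
  proof (rule integrableI_bounded_set[where A = S and B = B])
    show "(\<lambda>z. indicator S z *\<^sub>R d z) \<in> borel_measurable lborel"
      using borel_measurable_continuous_on_indicator[of S d] assms
      by (simp add: bounded_continuous_on_def)
    show "emeasure lborel S < \<infinity>" using emeasure_bounded_finite assms(2) by blast
  qed (use assms(1) B in auto)
qed

lemma has_integral_lborel_indicator_bounded_continuous:
  fixes S :: "'a::euclidean_space set"
  assumes "open S" "bounded S" "bounded_continuous_on S d"
  shows "(d has_integral integral\<^sup>L lborel (\<lambda>z. indicator S z *\<^sub>R d z)) S"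
  using has_integral_integral_lborel[OF integrable_lborel_indicator_bounded_continuous[OF assms]]
  unfolding indicator_scaleR_eq_if has_integral_restrict_UNIV .

lemma bounded_continuous_integrable_on:
  fixes S :: "'a::euclidean_space set"
  assumes "open S" "bounded S" "bounded_continuous_on S d"
  shows "d integrable_on S"
  using has_integral_lborel_indicator_bounded_continuous[OF assms] by blast

lemma integral_lborel_eq_0_if_has_integral_0:
  fixes f :: "real \<Rightarrow> real"
  assumes "(f has_integral 0) UNIV"
  shows "integral\<^sup>L lborel f = 0"
  using assms integral_lborel not_integrable_integral_eq has_integral_integrable_integral by metis

lemma has_integral_0_if_horizontal_sections:
  fixes S :: "(real \<times> real) set"
  assumes S: "open S" "bounded S" and d: "bounded_continuous_on S d"
    and sections: "\<And>x. ((\<lambda>t. d (t, x)) has_integral 0) {t. (t, x) \<in> S}"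
  shows "(d has_integral 0) S"
proof -
  let ?F = "\<lambda>z. indicator S z *\<^sub>R d z"
  have F: "integrable (lborel \<Otimes>\<^sub>M lborel) ?F"
    using integrable_lborel_indicator_bounded_continuous[OF S d] by (simp add: lborel_prod)
  have "integral\<^sup>L lborel ?F = (\<integral>(x, t). ?F (t, x) \<partial>(lborel \<Otimes>\<^sub>M lborel))"
    using lborel_pair.integral_product_swap[of ?F] F by (simp add: lborel_prod)
  also have "\<dots> = (\<integral>x. (\<integral>t. ?F (t, x) \<partial>lborel) \<partial>lborel)"
    using lborel_pair.integral_fst'[of "\<lambda>(x, t). ?F (t, x)"] F
      lborel_pair.integrable_product_swap[OF F] by simp
  also have "\<dots> = 0"
  proof -
    have "(\<lambda>t. ?F (t, x)) = (\<lambda>t. if t \<in> {t. (t, x) \<in> S} then d (t, x) else 0)" for x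
      by (auto simp: indicator_def)
    then have "((\<lambda>t. ?F (t, x)) has_integral 0) UNIV" for x
      by (simp only: has_integral_restrict_UNIV sections)
    then have "(\<integral>t. ?F (t, x) \<partial>lborel) = 0" for x
      by (rule integral_lborel_eq_0_if_has_integral_0)
    then show ?thesis by simp
  qed
  finally show ?thesis
    using has_integral_lborel_indicator_bounded_continuous[OF S d] by simp
qed

lemma has_integral_0_if_vertical_sections:
  fixes S :: "(real \<times> real) set"
  assumes S: "open S" "bounded S" and d: "bounded_continuous_on S d"
    and sections: "\<And>x. ((\<lambda>t. d (x, t)) has_integral 0) {t. (x, t) \<in> S}"
  shows "(d has_integral 0) S"
proof -
  let ?F = "\<lambda>z. indicator S z *\<^sub>R d z"
  have F: "integrable (lborel \<Otimes>\<^sub>M lborel) ?F"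
    using integrable_lborel_indicator_bounded_continuous[OF S d] by (simp add: lborel_prod)
  have "integral\<^sup>L lborel ?F = (\<integral>x. (\<integral>t. ?F (x, t) \<partial>lborel) \<partial>lborel)"
    using lborel_pair.integral_fst'[OF F] by (simp add: lborel_prod)
  also have "\<dots> = 0"
  proof -
    have "(\<lambda>t. ?F (x, t)) = (\<lambda>t. if t \<in> {t. (x, t) \<in> S} then d (x, t) else 0)" for x
      by (auto simp: indicator_def)
    then have "((\<lambda>t. ?F (x, t)) has_integral 0) UNIV" for x
      by (simp only: has_integral_restrict_UNIV sections)
    then have "(\<integral>t. ?F (x, t) \<partial>lborel) = 0" for x
      by (rule integral_lborel_eq_0_if_has_integral_0)
    then show ?thesis by simp
  qed
  finally show ?thesis
    using has_integral_lborel_indicator_bounded_continuous[OF S d] by simp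
qed

lemma has_integral_divergence_vanishing_at_frontier:
  fixes S :: "(real \<times> real) set" and f g f' g' :: "real \<times> real \<Rightarrow> real"
  assumes S: "open S" "convex S" "bounded S"
    and d: "bounded_continuous_on S f'" "bounded_continuous_on S g'"
    and deriv1: "\<And>y. y \<in> S \<Longrightarrow> ((\<lambda>t. f (t, snd y)) has_real_derivative f' y) (at (fst y))"
    and deriv2: "\<And>y. y \<in> S \<Longrightarrow> ((\<lambda>t. g (fst y, t)) has_real_derivative g' y) (at (snd y))"
    and lim1: "\<And>z. z \<in> frontier S \<Longrightarrow> (f \<longlongrightarrow> 0) (at z within S)"
    and lim2: "\<And>z. z \<in> frontier S \<Longrightarrow> (g \<longlongrightarrow> 0) (at z within S)"
  shows "((\<lambda>y. f' y + g' y) has_integral 0) S"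
proof -
  note sections = convex_bounded_sections[OF S(2,3)]
  have "(f' has_integral 0) S"
  proof (rule has_integral_0_if_horizontal_sections[OF S(1,3) d(1)])
    fix x
    have "((\<lambda>t. f' (t, x)) has_integral 0) ((\<lambda>t. (t, x)) -` S)"
    proof (rule has_integral_on_section_vanishing_at_frontier[OF S(1) _ _ _ _ lim1])
      show "((\<lambda>s. f (s, x)) has_real_derivative f' (t, x)) (at t)" if "(t, x) \<in> S" for t
        using deriv1[OF that] by simp
    qed (use sections in \<open>auto simp: vimage_def intro: continuous_on_Pair\<close>)
    then show "((\<lambda>t. f' (t, x)) has_integral 0) {t. (t, x) \<in> S}" by (simp add: vimage_def)
  qed
  moreover have "(g' has_integral 0) S"
  proof (rule has_integral_0_if_vertical_sections[OF S(1,3) d(2)])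
    fix x
    have "((\<lambda>t. g' (x, t)) has_integral 0) ((\<lambda>t. (x, t)) -` S)"
    proof (rule has_integral_on_section_vanishing_at_frontier[OF S(1) _ _ _ _ lim2])
      show "((\<lambda>s. g (x, s)) has_real_derivative g' (x, t)) (at t)" if "(x, t) \<in> S" for t
        using deriv2[OF that] by simp
    qed (use sections in \<open>auto simp: vimage_def intro: continuous_on_Pair\<close>)
    then show "((\<lambda>t. g' (x, t)) has_integral 0) {t. (x, t) \<in> S}" by (simp add: vimage_def)
  qed
  ultimately show ?thesis using has_integral_add[of f' 0 S g' 0] by simp
qed

section \<open>The ellipse, its torsion function and the pressure \<open>pbar\<close>\<close>

lemma has_real_derivative_pd1:
  "f differentiable (at y) \<Longrightarrow> ((\<lambda>t. f (t, snd y)) has_real_derivative pd1 f y) (at (fst y))"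
  unfolding pd1_def
  by (rule DERIV_deriv_iff_real_differentiable[THEN iffD2], rule differentiable_chain_at[unfolded o_def])
    (auto intro: derivative_intros)

lemma has_real_derivative_pd2:
  "f differentiable (at y) \<Longrightarrow> ((\<lambda>t. f (fst y, t)) has_real_derivative pd2 f y) (at (snd y))"
  unfolding pd2_def
  by (rule DERIV_deriv_iff_real_differentiable[THEN iffD2], rule differentiable_chain_at[unfolded o_def])
    (auto intro: derivative_intros)

lemma pd1_eqI: "((\<lambda>t. f (t, snd y)) has_real_derivative D) (at (fst y)) \<Longrightarrow> pd1 f y = D"
  unfolding pd1_def by (rule DERIV_imp_deriv)

lemma pd2_eqI: "((\<lambda>t. f (fst y, t)) has_real_derivative D) (at (snd y)) \<Longrightarrow> pd2 f y = D"
  unfolding pd2_def by (rule DERIV_imp_deriv)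

lemma
  assumes "open S" "bounded S" "C1_closure S f"
  shows C1_closure_bounded_continuous:
      "bounded_continuous_on S f" "bounded_continuous_on S (pd1 f)" "bounded_continuous_on S (pd2 f)"
    and C1_closure_differentiable_at: "y \<in> S \<Longrightarrow> f differentiable (at y)"
  using assms
  by (auto simp: C1_closure_def differentiable_on_eq_differentiable_at
      intro: bounded_continuous_on_closure uniformly_continuous_imp_bounded_continuous_on)

lemma
  assumes "open S" "bounded S" "C2_closure S f"
  shows C2_closure_bounded_continuous:
      "bounded_continuous_on S (pd1 (pd1 f))" "bounded_continuous_on S (pd2 (pd2 f))"
    and C2_closure_differentiable_at:
      "y \<in> S \<Longrightarrow> pd1 f differentiable (at y)" "y \<in> S \<Longrightarrow> pd2 f differentiable (at y)"
  using assms
  by (auto simp: C2_closure_def differentiable_on_eq_differentiable_at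
      intro: uniformly_continuous_imp_bounded_continuous_on)

lemma ellipse_eq_linear_image_ball:
  assumes "a1 > 0" "a2 > 0"
  shows "ellipse a1 a2 = (\<lambda>y. (a1 * fst y, a2 * snd y)) ` ball 0 1"
proof (intro subset_antisym subsetI)
  fix y assume "y \<in> ellipse a1 a2"
  moreover have "norm (fst y / a1, snd y / a2) = sqrt ((fst y)\<^sup>2 / a1\<^sup>2 + (snd y)\<^sup>2 / a2\<^sup>2)"
    by (simp add: norm_Pair power_divide)
  ultimately have "(fst y / a1, snd y / a2) \<in> ball 0 1"
    by (simp add: ellipse_def)
  then show "y \<in> (\<lambda>y. (a1 * fst y, a2 * snd y)) ` ball 0 1"
    using assms by (intro image_eqI[of _ _ "(fst y / a1, snd y / a2)"]) auto
next
  fix y assume "y \<in> (\<lambda>y. (a1 * fst y, a2 * snd y)) ` ball 0 1"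
  then obtain u v where "y = (a1 * u, a2 * v)" "sqrt (u\<^sup>2 + v\<^sup>2) < 1"
    by (force simp: norm_Pair)
  then show "y \<in> ellipse a1 a2"
    using assms by (simp add: ellipse_def power_mult_distrib)
qed

lemma
  assumes "a1 > 0" "a2 > 0"
  shows open_ellipse: "open (ellipse a1 a2)"
    and convex_ellipse: "convex (ellipse a1 a2)"
    and bounded_ellipse: "bounded (ellipse a1 a2)"
proof -
  have lin: "linear (\<lambda>y::real \<times> real. (a1 * fst y, a2 * snd y))"
    by (auto intro!: linearI simp: algebra_simps)
  show "open (ellipse a1 a2)"
    unfolding ellipse_def using assms by (intro open_Collect_less continuous_intros) auto
  show "convex (ellipse a1 a2)"
    unfolding ellipse_eq_linear_image_ball[OF assms] by (rule convex_linear_image[OF lin convex_ball])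
  show "bounded (ellipse a1 a2)"
    unfolding ellipse_eq_linear_image_ball[OF assms]
    by (rule bounded_linear_image[OF bounded_ball linear_conv_bounded_linear[THEN iffD1, OF lin]])
qed

lemma theta_eq_0_on_frontier_ellipse:
  assumes "a1 > 0" "a2 > 0" "z \<in> frontier (ellipse a1 a2)"
  shows "theta a1 a2 z = 0"
proof -
  have "closure (ellipse a1 a2) \<subseteq> {y. 0 \<le> theta a1 a2 y}"
    by (rule closure_minimal)
      (use assms in \<open>auto simp: ellipse_def theta_def intro!: closed_Collect_le continuous_intros\<close>)
  moreover have "z \<in> closure (ellipse a1 a2)" "z \<notin> ellipse a1 a2"
    using assms open_ellipse[OF assms(1,2)] by (auto simp: frontier_def interior_open)
  ultimately show ?thesis by (auto simp: ellipse_def theta_def)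
qed

definition torsion :: "real \<Rightarrow> real \<Rightarrow> real \<times> real \<Rightarrow> real" where
  "torsion a1 a2 y = a1\<^sup>2 * a2\<^sup>2 * theta a1 a2 y / (2 * (a1\<^sup>2 + a2\<^sup>2))"

definition torsion_d1 :: "real \<Rightarrow> real \<Rightarrow> real \<times> real \<Rightarrow> real" where
  "torsion_d1 a1 a2 y = - a2\<^sup>2 * fst y / (a1\<^sup>2 + a2\<^sup>2)"

definition torsion_d2 :: "real \<Rightarrow> real \<Rightarrow> real \<times> real \<Rightarrow> real" where
  "torsion_d2 a1 a2 y = - a1\<^sup>2 * snd y / (a1\<^sup>2 + a2\<^sup>2)"

definition pbar_d1 :: "real \<Rightarrow> real \<Rightarrow> real \<Rightarrow> real \<times> real \<Rightarrow> real" where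
  "pbar_d1 p0 a1 a2 y = - 4 * p0 * theta a1 a2 y * fst y / a1\<^sup>2"

definition pbar_d2 :: "real \<Rightarrow> real \<Rightarrow> real \<Rightarrow> real \<times> real \<Rightarrow> real" where
  "pbar_d2 p0 a1 a2 y = - 4 * p0 * theta a1 a2 y * snd y / a2\<^sup>2"

definition pbar_d11 :: "real \<Rightarrow> real \<Rightarrow> real \<Rightarrow> real \<times> real \<Rightarrow> real" where
  "pbar_d11 p0 a1 a2 y = 4 * p0 * (2 * (fst y)\<^sup>2 / a1\<^sup>2 - theta a1 a2 y) / a1\<^sup>2"

definition pbar_d22 :: "real \<Rightarrow> real \<Rightarrow> real \<Rightarrow> real \<times> real \<Rightarrow> real" where
  "pbar_d22 p0 a1 a2 y = 4 * p0 * (2 * (snd y)\<^sup>2 / a2\<^sup>2 - theta a1 a2 y) / a2\<^sup>2"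

lemma
  assumes "a1 > 0" "a2 > 0"
  shows continuous_torsion: "continuous_on UNIV (torsion a1 a2)"
    and continuous_torsion_d: "continuous_on UNIV (torsion_d1 a1 a2)" "continuous_on UNIV (torsion_d2 a1 a2)"
    and continuous_pbar_d: "continuous_on UNIV (pbar_d1 p0 a1 a2)" "continuous_on UNIV (pbar_d2 p0 a1 a2)"
      "continuous_on UNIV (pbar_d11 p0 a1 a2)" "continuous_on UNIV (pbar_d22 p0 a1 a2)"
    and continuous_rho: "continuous_on UNIV (rho a1 a2)"
  using assms
  unfolding torsion_def torsion_d1_def torsion_d2_def pbar_d1_def pbar_d2_def pbar_d11_def pbar_d22_def
    rho_def theta_def Let_def
  by (auto intro!: continuous_intros simp: add_nonneg_eq_0_iff)

lemma
  assumes "a1 > 0" "a2 > 0"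
  shows torsion_deriv1: "((\<lambda>t. torsion a1 a2 (t, snd y)) has_real_derivative torsion_d1 a1 a2 y) (at (fst y))"
    and torsion_deriv2: "((\<lambda>t. torsion a1 a2 (fst y, t)) has_real_derivative torsion_d2 a1 a2 y) (at (snd y))"
    and torsion_d1_deriv1: "((\<lambda>t. torsion_d1 a1 a2 (t, snd y)) has_real_derivative
      - a2\<^sup>2 / (a1\<^sup>2 + a2\<^sup>2)) (at (fst y))"
    and torsion_d2_deriv2: "((\<lambda>t. torsion_d2 a1 a2 (fst y, t)) has_real_derivative
      - a1\<^sup>2 / (a1\<^sup>2 + a2\<^sup>2)) (at (snd y))"
proof -
  define k where "k = a1\<^sup>2 + a2\<^sup>2"
  have "k \<noteq> 0" using assms by (simp add: k_def add_pos_pos)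
  then show "((\<lambda>t. torsion a1 a2 (t, snd y)) has_real_derivative torsion_d1 a1 a2 y) (at (fst y))"
    "((\<lambda>t. torsion a1 a2 (fst y, t)) has_real_derivative torsion_d2 a1 a2 y) (at (snd y))"
    "((\<lambda>t. torsion_d1 a1 a2 (t, snd y)) has_real_derivative - a2\<^sup>2 / (a1\<^sup>2 + a2\<^sup>2)) (at (fst y))"
    "((\<lambda>t. torsion_d2 a1 a2 (fst y, t)) has_real_derivative - a1\<^sup>2 / (a1\<^sup>2 + a2\<^sup>2)) (at (snd y))"
    using assms unfolding torsion_def torsion_d1_def torsion_d2_def theta_def k_def[symmetric]
    by (auto intro!: derivative_eq_intros simp: field_simps)
qed

lemma torsion_second_derivatives_sum:
  fixes a1 a2 :: real
  assumes "a1 > 0" "a2 > 0"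
  shows "- a2\<^sup>2 / (a1\<^sup>2 + a2\<^sup>2) + - a1\<^sup>2 / (a1\<^sup>2 + a2\<^sup>2) = -1"
proof -
  define k where "k = a1\<^sup>2 + a2\<^sup>2"
  have "k \<noteq> 0" using assms by (simp add: k_def add_pos_pos)
  moreover have "- a2\<^sup>2 / k + - a1\<^sup>2 / k = - ((a1\<^sup>2 + a2\<^sup>2) / k)"
    by (simp add: add_divide_distrib)
  ultimately show ?thesis unfolding k_def[symmetric] by simp
qed

lemma torsion_tendsto_0_at_frontier:
  assumes "a1 > 0" "a2 > 0" "z \<in> frontier (ellipse a1 a2)"
  shows "(torsion a1 a2 \<longlongrightarrow> 0) (at z within ellipse a1 a2)"
  using tendsto_at_frontier_within[OF continuous_on_subset[OF continuous_torsion[OF assms(1,2)] subset_UNIV]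
      assms(3)]
    theta_eq_0_on_frontier_ellipse[OF assms] by (simp add: torsion_def)

lemma
  assumes "a1 > 0" "a2 > 0"
  shows pbar_deriv1: "((\<lambda>t. pbar p0 a1 a2 (t, snd y)) has_real_derivative pbar_d1 p0 a1 a2 y) (at (fst y))"
    and pbar_deriv2: "((\<lambda>t. pbar p0 a1 a2 (fst y, t)) has_real_derivative pbar_d2 p0 a1 a2 y) (at (snd y))"
    and pbar_d1_deriv1: "((\<lambda>t. pbar_d1 p0 a1 a2 (t, snd y)) has_real_derivative pbar_d11 p0 a1 a2 y) (at (fst y))"
    and pbar_d2_deriv2: "((\<lambda>t. pbar_d2 p0 a1 a2 (fst y, t)) has_real_derivative pbar_d22 p0 a1 a2 y) (at (snd y))"
  using assms unfolding pbar_def pbar_d1_def pbar_d2_def pbar_d11_def pbar_d22_def theta_def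
  by (auto intro!: derivative_eq_intros simp: field_simps power2_eq_square)

lemma div_H_grad_pbar:
  assumes "a1 > 0" "a2 > 0" "H differentiable (at y)"
  shows "div_H_grad H (pbar p0 a1 a2) y
    = (pd1 H y * pbar_d1 p0 a1 a2 y + H y * pbar_d11 p0 a1 a2 y)
    + (pd2 H y * pbar_d2 p0 a1 a2 y + H y * pbar_d22 p0 a1 a2 y)"
proof -
  have "pd1 (pbar p0 a1 a2) = pbar_d1 p0 a1 a2" "pd2 (pbar p0 a1 a2) = pbar_d2 p0 a1 a2"
    using pd1_eqI[OF pbar_deriv1[OF assms(1,2)]] pd2_eqI[OF pbar_deriv2[OF assms(1,2)]] by auto
  then show ?thesis
    unfolding div_H_grad_def
    using pd1_eqI[OF DERIV_mult[OF has_real_derivative_pd1[OF assms(3)] pbar_d1_deriv1[OF assms(1,2)]]]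
      pd2_eqI[OF DERIV_mult[OF has_real_derivative_pd2[OF assms(3)] pbar_d2_deriv2[OF assms(1,2)]]]
    by simp
qed

lemma torsion_grad_dot_pbar_grad:
  assumes "a1 > 0" "a2 > 0"
  shows "torsion_d1 a1 a2 y * pbar_d1 p0 a1 a2 y + torsion_d2 a1 a2 y * pbar_d2 p0 a1 a2 y
    = 4 * p0 * a1 * a2 / (a1\<^sup>2 + a2\<^sup>2) * rho a1 a2 y"
proof -
  define k where "k = a1\<^sup>2 + a2\<^sup>2"
  have "k \<noteq> 0" using assms by (simp add: k_def add_pos_pos)
  then show ?thesis
    using assms unfolding torsion_d1_def torsion_d2_def pbar_d1_def pbar_d2_def rho_def Let_def k_def[symmetric]
    by (simp add: field_simps power2_eq_square)
qed

section \<open>Integration by parts against the torsion function\<close>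

lemma has_integral_green_second_identity_torsion:
  fixes p :: "real \<times> real \<Rightarrow> real"
  assumes a: "a1 > 0" "a2 > 0" and p: "C2_closure (ellipse a1 a2) p"
    and p_frontier: "\<And>z. z \<in> frontier (ellipse a1 a2) \<Longrightarrow> p z = 0"
  shows "((\<lambda>y. (p y * (- a2\<^sup>2 / (a1\<^sup>2 + a2\<^sup>2)) - torsion a1 a2 y * pd1 (pd1 p) y)
      + (p y * (- a1\<^sup>2 / (a1\<^sup>2 + a2\<^sup>2)) - torsion a1 a2 y * pd2 (pd2 p) y)) has_integral 0)
    (ellipse a1 a2)"
proof -
  let ?S = "ellipse a1 a2" and ?w = "torsion a1 a2"
  let ?c1 = "- a2\<^sup>2 / (a1\<^sup>2 + a2\<^sup>2)" and ?c2 = "- a1\<^sup>2 / (a1\<^sup>2 + a2\<^sup>2)"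
  note S = open_ellipse[OF a] convex_ellipse[OF a] bounded_ellipse[OF a]
  have p1: "C1_closure ?S p" using p by (simp add: C2_closure_def)
  note bc_p = C1_closure_bounded_continuous[OF S(1,3) p1] C2_closure_bounded_continuous[OF S(1,3) p]
  note p_diff = C1_closure_differentiable_at[OF S(1,3) p1] C2_closure_differentiable_at[OF S(1,3) p]
  have bc_w: "bounded_continuous_on ?S ?w" "bounded_continuous_on ?S (torsion_d1 a1 a2)"
    "bounded_continuous_on ?S (torsion_d2 a1 a2)"
    using continuous_torsion[OF a] continuous_torsion_d[OF a]
    by (auto intro: continuous_imp_bounded_continuous_on[OF S(3)])
  have "continuous_on (closure ?S) p" using p1 by (simp add: C1_closure_def)
  from tendsto_at_frontier_within[OF this] p_frontier
  have p_lim: "(p \<longlongrightarrow> 0) (at z within ?S)" if "z \<in> frontier ?S" for z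
    using that by simp
  show ?thesis
  proof (rule has_integral_divergence_vanishing_at_frontier[OF S,
        where f = "\<lambda>y. p y * torsion_d1 a1 a2 y - ?w y * pd1 p y"
          and g = "\<lambda>y. p y * torsion_d2 a1 a2 y - ?w y * pd2 p y"])
    fix y assume y: "y \<in> ?S"
    show "((\<lambda>t. p (t, snd y) * torsion_d1 a1 a2 (t, snd y) - ?w (t, snd y) * pd1 p (t, snd y))
        has_real_derivative p y * ?c1 - ?w y * pd1 (pd1 p) y) (at (fst y))"
      by (rule DERIV_diff[OF DERIV_mult[OF has_real_derivative_pd1 torsion_d1_deriv1[OF a]]
            DERIV_mult[OF torsion_deriv1[OF a] has_real_derivative_pd1], THEN DERIV_cong])
        (use p_diff[OF y] in \<open>simp_all add: algebra_simps\<close>)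
    show "((\<lambda>t. p (fst y, t) * torsion_d2 a1 a2 (fst y, t) - ?w (fst y, t) * pd2 p (fst y, t))
        has_real_derivative p y * ?c2 - ?w y * pd2 (pd2 p) y) (at (snd y))"
      by (rule DERIV_diff[OF DERIV_mult[OF has_real_derivative_pd2 torsion_d2_deriv2[OF a]]
            DERIV_mult[OF torsion_deriv2[OF a] has_real_derivative_pd2], THEN DERIV_cong])
        (use p_diff[OF y] in \<open>simp_all add: algebra_simps\<close>)
  next
    fix z assume z: "z \<in> frontier ?S"
    have bdd: "bounded (torsion_d1 a1 a2 ` ?S)" "bounded (torsion_d2 a1 a2 ` ?S)"
      "bounded (pd1 p ` ?S)" "bounded (pd2 p ` ?S)"
      using bc_w bc_p by (simp_all add: bounded_continuous_on_def)
    show "((\<lambda>y. p y * torsion_d1 a1 a2 y - ?w y * pd1 p y) \<longlongrightarrow> 0) (at z within ?S)"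
      "((\<lambda>y. p y * torsion_d2 a1 a2 y - ?w y * pd2 p y) \<longlongrightarrow> 0) (at z within ?S)"
      using tendsto_diff[OF tendsto_zero_mult_bounded[OF p_lim[OF z] bdd(1)]
          tendsto_zero_mult_bounded[OF torsion_tendsto_0_at_frontier[OF a z] bdd(3)]]
        tendsto_diff[OF tendsto_zero_mult_bounded[OF p_lim[OF z] bdd(2)]
          tendsto_zero_mult_bounded[OF torsion_tendsto_0_at_frontier[OF a z] bdd(4)]]
      by simp_all
  qed (intro bounded_continuous_on_diff bounded_continuous_on_mult bc_p bc_w bounded_continuous_on_const)+
qed

lemma has_integral_torsion_laplacian:
  fixes p :: "real \<times> real \<Rightarrow> real"
  assumes a: "a1 > 0" "a2 > 0" and p: "C2_closure (ellipse a1 a2) p"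
    and p_frontier: "\<And>z. z \<in> frontier (ellipse a1 a2) \<Longrightarrow> p z = 0"
  shows "((\<lambda>y. torsion a1 a2 y * laplacian p y) has_integral - integral (ellipse a1 a2) p)
    (ellipse a1 a2)"
proof -
  let ?S = "ellipse a1 a2" and ?w = "torsion a1 a2"
  let ?c1 = "- a2\<^sup>2 / (a1\<^sup>2 + a2\<^sup>2)" and ?c2 = "- a1\<^sup>2 / (a1\<^sup>2 + a2\<^sup>2)"
  have "(p y * ?c1 - ?w y * pd1 (pd1 p) y) + (p y * ?c2 - ?w y * pd2 (pd2 p) y)
      = - p y - ?w y * laplacian p y" for y
  proof -
    have "(p y * ?c1 - ?w y * pd1 (pd1 p) y) + (p y * ?c2 - ?w y * pd2 (pd2 p) y)
        = p y * (?c1 + ?c2) - ?w y * laplacian p y"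
      by (simp add: laplacian_def algebra_simps)
    then show ?thesis unfolding torsion_second_derivatives_sum[OF a] by simp
  qed
  with has_integral_green_second_identity_torsion[OF a p p_frontier]
  have zero: "((\<lambda>y. - p y - ?w y * laplacian p y) has_integral 0) ?S"
    by simp
  have "C1_closure ?S p" using p by (simp add: C2_closure_def)
  then have "(p has_integral integral ?S p) ?S"
    using bounded_continuous_integrable_on C1_closure_bounded_continuous(1) open_ellipse[OF a]
      bounded_ellipse[OF a] by blast
  from has_integral_diff[OF has_integral_neg[OF this] zero] show ?thesis by simp
qed

lemma has_integral_green_first_identity_torsion_pbar:
  fixes H :: "real \<times> real \<Rightarrow> real"
  assumes a: "a1 > 0" "a2 > 0" and H: "C1_closure (ellipse a1 a2) H"
  shows "((\<lambda>y. (torsion_d1 a1 a2 y * (H y * pbar_d1 p0 a1 a2 y)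
        + torsion a1 a2 y * (pd1 H y * pbar_d1 p0 a1 a2 y + H y * pbar_d11 p0 a1 a2 y))
      + (torsion_d2 a1 a2 y * (H y * pbar_d2 p0 a1 a2 y)
        + torsion a1 a2 y * (pd2 H y * pbar_d2 p0 a1 a2 y + H y * pbar_d22 p0 a1 a2 y))) has_integral 0)
    (ellipse a1 a2)"
proof -
  let ?S = "ellipse a1 a2" and ?w = "torsion a1 a2"
  let ?P1 = "pbar_d1 p0 a1 a2" and ?P2 = "pbar_d2 p0 a1 a2"
  let ?D1 = "\<lambda>y. pd1 H y * ?P1 y + H y * pbar_d11 p0 a1 a2 y"
    and ?D2 = "\<lambda>y. pd2 H y * ?P2 y + H y * pbar_d22 p0 a1 a2 y"
  note S = open_ellipse[OF a] convex_ellipse[OF a] bounded_ellipse[OF a]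
  note bc_H = C1_closure_bounded_continuous[OF S(1,3) H]
  note H_diff = C1_closure_differentiable_at[OF S(1,3) H]
  have bc: "bounded_continuous_on ?S ?w" "bounded_continuous_on ?S (torsion_d1 a1 a2)"
    "bounded_continuous_on ?S (torsion_d2 a1 a2)" "bounded_continuous_on ?S ?P1"
    "bounded_continuous_on ?S ?P2" "bounded_continuous_on ?S (pbar_d11 p0 a1 a2)"
    "bounded_continuous_on ?S (pbar_d22 p0 a1 a2)"
    using continuous_torsion[OF a] continuous_torsion_d[OF a] continuous_pbar_d[OF a]
    by (auto intro: continuous_imp_bounded_continuous_on[OF S(3)])
  show ?thesis
  proof (rule has_integral_divergence_vanishing_at_frontier[OF S,
        where f = "\<lambda>y. ?w y * (H y * ?P1 y)" and g = "\<lambda>y. ?w y * (H y * ?P2 y)"])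
    fix y assume y: "y \<in> ?S"
    show "((\<lambda>t. ?w (t, snd y) * (H (t, snd y) * ?P1 (t, snd y))) has_real_derivative
        torsion_d1 a1 a2 y * (H y * ?P1 y) + ?w y * ?D1 y) (at (fst y))"
      by (rule DERIV_mult[OF torsion_deriv1[OF a]
            DERIV_mult[OF has_real_derivative_pd1[OF H_diff[OF y]] pbar_d1_deriv1[OF a]], THEN DERIV_cong])
        (simp add: algebra_simps)
    show "((\<lambda>t. ?w (fst y, t) * (H (fst y, t) * ?P2 (fst y, t))) has_real_derivative
        torsion_d2 a1 a2 y * (H y * ?P2 y) + ?w y * ?D2 y) (at (snd y))"
      by (rule DERIV_mult[OF torsion_deriv2[OF a]
            DERIV_mult[OF has_real_derivative_pd2[OF H_diff[OF y]] pbar_d2_deriv2[OF a]], THEN DERIV_cong])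
        (simp add: algebra_simps)
  next
    fix z assume z: "z \<in> frontier ?S"
    have "bounded ((\<lambda>y. H y * ?P1 y) ` ?S)" "bounded ((\<lambda>y. H y * ?P2 y) ` ?S)"
      using bounded_continuous_on_mult[OF bc_H(1) bc(4)] bounded_continuous_on_mult[OF bc_H(1) bc(5)]
      by (simp_all add: bounded_continuous_on_def)
    then show "((\<lambda>y. ?w y * (H y * ?P1 y)) \<longlongrightarrow> 0) (at z within ?S)"
      "((\<lambda>y. ?w y * (H y * ?P2 y)) \<longlongrightarrow> 0) (at z within ?S)"
      by (auto intro: tendsto_zero_mult_bounded[OF torsion_tendsto_0_at_frontier[OF a z]])
  qed (intro bounded_continuous_on_add bounded_continuous_on_mult bc_H bc)+
qed

lemma has_integral_torsion_div_H_grad_pbar: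
  fixes H :: "real \<times> real \<Rightarrow> real"
  assumes a: "a1 > 0" "a2 > 0" and H: "C1_closure (ellipse a1 a2) H"
  shows "((\<lambda>y. torsion a1 a2 y * div_H_grad H (pbar p0 a1 a2) y) has_integral
      - (4 * p0 * a1 * a2 / (a1\<^sup>2 + a2\<^sup>2)) * integral (ellipse a1 a2) (\<lambda>y. H y * rho a1 a2 y))
    (ellipse a1 a2)"
proof -
  let ?S = "ellipse a1 a2" and ?w = "torsion a1 a2" and ?K = "4 * p0 * a1 * a2 / (a1\<^sup>2 + a2\<^sup>2)"
  let ?P1 = "pbar_d1 p0 a1 a2" and ?P2 = "pbar_d2 p0 a1 a2"
  let ?D1 = "\<lambda>y. pd1 H y * ?P1 y + H y * pbar_d11 p0 a1 a2 y"
    and ?D2 = "\<lambda>y. pd2 H y * ?P2 y + H y * pbar_d22 p0 a1 a2 y"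
  note S = open_ellipse[OF a] bounded_ellipse[OF a]
  have "(torsion_d1 a1 a2 y * (H y * ?P1 y) + ?w y * ?D1 y)
      + (torsion_d2 a1 a2 y * (H y * ?P2 y) + ?w y * ?D2 y)
      = ?K * (H y * rho a1 a2 y) + ?w y * div_H_grad H (pbar p0 a1 a2) y" if "y \<in> ?S" for y
  proof -
    have "(torsion_d1 a1 a2 y * (H y * ?P1 y) + ?w y * ?D1 y)
        + (torsion_d2 a1 a2 y * (H y * ?P2 y) + ?w y * ?D2 y)
        = H y * (torsion_d1 a1 a2 y * ?P1 y + torsion_d2 a1 a2 y * ?P2 y) + ?w y * (?D1 y + ?D2 y)"
      by (simp add: algebra_simps)
    then show ?thesis
      unfolding torsion_grad_dot_pbar_grad[OF a] div_H_grad_pbar[OF a C1_closure_differentiable_at[OF S H that]]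
      by (simp add: algebra_simps)
  qed
  from has_integral_cong[THEN iffD1, OF this has_integral_green_first_identity_torsion_pbar[OF a H]]
  have zero: "((\<lambda>y. ?K * (H y * rho a1 a2 y) + ?w y * div_H_grad H (pbar p0 a1 a2) y)
      has_integral 0) ?S" .
  have "bounded_continuous_on ?S (\<lambda>y. H y * rho a1 a2 y)"
    using C1_closure_bounded_continuous(1)[OF S H]
      continuous_imp_bounded_continuous_on[OF S(2) continuous_rho[OF a]]
    by (rule bounded_continuous_on_mult)
  then have "((\<lambda>y. ?K * (H y * rho a1 a2 y)) has_integral ?K * integral ?S (\<lambda>y. H y * rho a1 a2 y)) ?S"
    using bounded_continuous_integrable_on[OF S] by (intro has_integral_mult_right integrable_integral)
  from has_integral_diff[OF zero this] show ?thesis by simp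
qed

theorem mainTheorem1:
  fixes a1 a2 p0 m h1 h2 E1 E2 :: real
    and H1 H2 p :: "real \<times> real \<Rightarrow> real"
  assumes "a1 > 0" "a2 > 0" "p0 > 0" "m > 0" "h1 > 0" "h2 > 0" "E1 > 0" "E2 > 0"
    and "C1_closure (ellipse a1 a2) H1" "C1_closure (ellipse a1 a2) H2"
    and "C2_closure (ellipse a1 a2) p"
    and "\<forall>y \<in> ellipse a1 a2.
           - (1 / m) * laplacian p y =
             3 * h1\<^sup>2 / E1 * div_H_grad H1 (pbar p0 a1 a2) y
           + 3 * h2\<^sup>2 / E2 * div_H_grad H2 (pbar p0 a1 a2) y"
    and "\<forall>y \<in> frontier (ellipse a1 a2). p y = 0"
  shows "integral (ellipse a1 a2) p = 0 \<longleftrightarrow>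
    h1\<^sup>2 / E1 * integral (ellipse a1 a2) (\<lambda>y. H1 y * rho a1 a2 y)
  + h2\<^sup>2 / E2 * integral (ellipse a1 a2) (\<lambda>y. H2 y * rho a1 a2 y) = 0"
proof -
  let ?S = "ellipse a1 a2" and ?w = "torsion a1 a2" and ?K = "4 * p0 * a1 * a2 / (a1\<^sup>2 + a2\<^sup>2)"
  let ?D1 = "div_H_grad H1 (pbar p0 a1 a2)" and ?D2 = "div_H_grad H2 (pbar p0 a1 a2)"
  let ?I1 = "integral ?S (\<lambda>y. H1 y * rho a1 a2 y)" and ?I2 = "integral ?S (\<lambda>y. H2 y * rho a1 a2 y)"
  have a: "a1 > 0" "a2 > 0" using assms(1,2) .
  have pde: "?w y * laplacian p y = - (3 * m) * (h1\<^sup>2 / E1 * (?w y * ?D1 y) + h2\<^sup>2 / E2 * (?w y * ?D2 y))"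
    if "y \<in> ?S" for y
  proof -
    have "- (1 / m) * laplacian p y = 3 * h1\<^sup>2 / E1 * ?D1 y + 3 * h2\<^sup>2 / E2 * ?D2 y"
      using assms(12) that by blast
    then have "laplacian p y = - (3 * m) * (h1\<^sup>2 / E1 * ?D1 y + h2\<^sup>2 / E2 * ?D2 y)"
      using assms(4) by (simp add: field_simps)
    then show ?thesis by (simp only: algebra_simps)
  qed
  have "((\<lambda>y. ?w y * laplacian p y) has_integral
      - (3 * m) * (h1\<^sup>2 / E1 * (- ?K * ?I1) + h2\<^sup>2 / E2 * (- ?K * ?I2))) ?S"
    by (rule has_integral_cong[THEN iffD2, OF pde])
      (assumption, intro has_integral_mult_right has_integral_add
        has_integral_torsion_div_H_grad_pbar[OF a assms(9)] has_integral_torsion_div_H_grad_pbar[OF a assms(10)])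
  moreover have "((\<lambda>y. ?w y * laplacian p y) has_integral - integral ?S p) ?S"
    using has_integral_torsion_laplacian[OF a assms(11)] assms(13) by blast
  ultimately have "- integral ?S p = - (3 * m) * (h1\<^sup>2 / E1 * (- ?K * ?I1) + h2\<^sup>2 / E2 * (- ?K * ?I2))"
    by (rule has_integral_unique[rotated])
  then have "integral ?S p = - (3 * m * ?K) * (h1\<^sup>2 / E1 * ?I1 + h2\<^sup>2 / E2 * ?I2)"
    by (simp add: algebra_simps)
  moreover have "3 * m * ?K \<noteq> 0" using assms(1-4) by (simp add: add_pos_pos)
  ultimately show ?thesis by simp
qed

end
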